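(* Let $S$ be a semigroup of transformations of a finite set $\Omega$ with $|\Omega|=n$, and suppose $S$ contains a permutation group $G$ that is primitive on $\Omega$. Suppose the minimum rank of an element of $S$ is $r$, where $r>1$. Then there is no element of $S$ of rank greater than $r$ whose kernel partition has $r-1$ parts of size $n/r$.
   Context: The rank of a transformation $h$ is $|\Omega h|$; its kernel partition is the partition of $\Omega$ into the inverse images of the points of its image. A permutation group is primitive if it is transitive and preserves no equivalence relation other than equality and the universal relation. *)

theory Defs
  imports Complex_Main "HOL-Library.FuncSet"
begin

definition transf_semigroup :: "'a set \<Rightarrow> ('a \<Rightarrow> 'a) set \<Rightarrow> bool" where
  "transf_semigroup \<Omega> S \<longleftrightarrow> S \<subseteq> (\<Omega> \<rightarrow>\<^sub>E \<Omega>) \<and>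
     (\<forall>f\<in>S. \<forall>g\<in>S. compose \<Omega> g f \<in> S)"

definition perm_group :: "'a set \<Rightarrow> ('a \<Rightarrow> 'a) set \<Rightarrow> bool" where
  "perm_group \<Omega> G \<longleftrightarrow> G \<subseteq> (\<Omega> \<rightarrow>\<^sub>E \<Omega>) \<and>
     (\<forall>g\<in>G. bij_betw g \<Omega> \<Omega>) \<and>
     restrict id \<Omega> \<in> G \<and>
     (\<forall>f\<in>G. \<forall>g\<in>G. compose \<Omega> g f \<in> G) \<and>
     (\<forall>g\<in>G. restrict (inv_into \<Omega> g) \<Omega> \<in> G)"

definition transitive_on :: "'a set \<Rightarrow> ('a \<Rightarrow> 'a) set \<Rightarrow> bool" where
  "transitive_on \<Omega> G \<longleftrightarrow> (\<forall>x\<in>\<Omega>. \<forall>y\<in>\<Omega>. \<exists>g\<in>G. g x = y)"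

definition preserves_rel :: "('a \<Rightarrow> 'a) set \<Rightarrow> 'a rel \<Rightarrow> bool" where
  "preserves_rel G R \<longleftrightarrow> (\<forall>g\<in>G. \<forall>(x, y)\<in>R. (g x, g y) \<in> R)"

definition primitive :: "'a set \<Rightarrow> ('a \<Rightarrow> 'a) set \<Rightarrow> bool" where
  "primitive \<Omega> G \<longleftrightarrow> transitive_on \<Omega> G \<and>
     (\<forall>R. equiv \<Omega> R \<and> preserves_rel G R \<longrightarrow> R = Id_on \<Omega> \<or> R = \<Omega> \<times> \<Omega>)"

definition rank :: "'a set \<Rightarrow> ('a \<Rightarrow> 'a) \<Rightarrow> nat" where
  "rank \<Omega> h = card (h ` \<Omega>)"

definition kernel_partition :: "'a set \<Rightarrow> ('a \<Rightarrow> 'a) \<Rightarrow> 'a set set" where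
  "kernel_partition \<Omega> h = {\<Omega> \<inter> h -` {y} | y. y \<in> h ` \<Omega>}"

end

theory Submission
  imports Defs
begin

text \<open>
  Let \<open>f\<close> have the minimal rank \<open>r\<close>. For every \<open>s \<in> S\<close> the map \<open>f \<circ> s \<circ> f\<close> again has
  rank \<open>r\<close>, so \<open>f \<circ> s\<close> permutes the image of \<open>f\<close>. Counting the pairs \<open>(g, a) \<in> G \<times> f(\<Omega>)\<close>
  with \<open>f (g a) = y\<close> in two ways, using transitivity of \<open>G\<close>, shows that every kernel class of
  an element of minimal rank has exactly \<open>n / r\<close> points.

  Now suppose \<open>h\<close> has rank \<open>> r\<close> and \<open>r - 1\<close> kernel classes of size \<open>n / r\<close>. The remaining
  \<open>n / r\<close> points carry at least two \<open>h\<close>-classes, with distinct values \<open>y\<^sub>1, y\<^sub>2\<close>. For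
  \<open>g \<in> G\<close> the map \<open>f \<circ> g \<circ> h\<close> has minimal rank and a kernel coarser than that of \<open>h\<close>; each
  of its classes has \<open>n / r\<close> points, so it is either one of the large \<open>h\<close>-classes or avoids
  them all, and hence the remaining points form a single class: \<open>f (g y\<^sub>1) = f (g y\<^sub>2)\<close>.
  Thus "\<open>f (g a) = f (g b)\<close> for all \<open>g \<in> G\<close>" is a nontrivial \<open>G\<close>-invariant equivalence
  relation, so by primitivity it is universal and \<open>f\<close> is constant, contradicting \<open>r > 1\<close>.
\<close>

lemma perm_group_closed: "perm_group \<Omega> G \<Longrightarrow> g \<in> G \<Longrightarrow> x \<in> \<Omega> \<Longrightarrow> g x \<in> \<Omega>"
  unfolding perm_group_def by auto

lemma perm_group_compose: "perm_group \<Omega> G \<Longrightarrow> f \<in> G \<Longrightarrow> g \<in> G \<Longrightarrow> compose \<Omega> g f \<in> G"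
  unfolding perm_group_def by auto

lemma perm_group_finite: "finite \<Omega> \<Longrightarrow> perm_group \<Omega> G \<Longrightarrow> finite G"
  unfolding perm_group_def by (meson finite_PiE finite_subset)

lemma transf_semigroup_closed: "transf_semigroup \<Omega> S \<Longrightarrow> f \<in> S \<Longrightarrow> x \<in> \<Omega> \<Longrightarrow> f x \<in> \<Omega>"
  unfolding transf_semigroup_def by auto

lemma sum_card_Collect_swap:
  "finite A \<Longrightarrow> finite B \<Longrightarrow>
    (\<Sum>a\<in>A. card {b \<in> B. R a b}) = (\<Sum>b\<in>B. card {a \<in> A. R a b})"
  using sum.swap_restrict[of A B "\<lambda>_ _. 1::nat" R] by simp

lemma card_preimage_eq_sum_card_fibres:
  assumes "finite X" and "\<And>x. x \<in> X \<Longrightarrow> \<phi> x \<in> Y" and "finite Y"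
  shows "card {x \<in> X. \<phi> x \<in> P} = (\<Sum>p\<in>Y \<inter> P. card {x \<in> X. \<phi> x = p})"
proof -
  have eq: "{x \<in> X. \<phi> x \<in> P} = (\<Union>p\<in>Y \<inter> P. {x \<in> X. \<phi> x = p})"
    using assms(2) by auto
  show ?thesis
    unfolding eq by (rule card_UN_disjoint) (use assms in auto)
qed

lemma perm_group_inj_on_compose_both_sides:
  assumes G: "perm_group \<Omega> G" and "s \<in> G" "t \<in> G"
  shows "inj_on (\<lambda>g. compose \<Omega> t (compose \<Omega> g s)) G"
proof (rule inj_onI)
  fix g1 g2 assume g: "g1 \<in> G" "g2 \<in> G"
    and eq: "compose \<Omega> t (compose \<Omega> g1 s) = compose \<Omega> t (compose \<Omega> g2 s)"
  have bij: "bij_betw s \<Omega> \<Omega>" "bij_betw t \<Omega> \<Omega>" and ext: "g1 \<in> extensional \<Omega>" "g2 \<in> extensional \<Omega>"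
    using G \<open>s \<in> G\<close> \<open>t \<in> G\<close> g unfolding perm_group_def by (auto simp: PiE_iff)
  show "g1 = g2"
  proof (rule extensionalityI[OF ext])
    fix x assume "x \<in> \<Omega>"
    then obtain z where z: "z \<in> \<Omega>" "s z = x"
      using bij(1) by (metis bij_betw_imp_surj_on imageE)
    have "t (g1 x) = t (g2 x)"
      using fun_cong[OF eq, of z] z perm_group_closed[OF G \<open>s \<in> G\<close>] by (simp add: compose_def)
    then show "g1 x = g2 x"
      using bij(2) \<open>x \<in> \<Omega>\<close> perm_group_closed[OF G] g by (metis bij_betw_imp_inj_on inj_onD)
  qed
qed

lemma card_transporter_le:
  assumes fin: "finite \<Omega>" and G: "perm_group \<Omega> G" and tr: "transitive_on \<Omega> G"
    and "a \<in> \<Omega>" "p \<in> \<Omega>" "a' \<in> \<Omega>" "p' \<in> \<Omega>"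
  shows "card {g \<in> G. g a = p} \<le> card {g \<in> G. g a' = p'}"
proof -
  obtain s t where s: "s \<in> G" "s a' = a" and t: "t \<in> G" "t p = p'"
    using tr assms(4-7) unfolding transitive_on_def by blast
  define \<phi> where "\<phi> g = compose \<Omega> t (compose \<Omega> g s)" for g
  have "inj_on \<phi> {g \<in> G. g a = p}"
    using perm_group_inj_on_compose_both_sides[OF G s(1) t(1)] unfolding \<phi>_def
    by (rule inj_on_subset) auto
  moreover have "\<phi> ` {g \<in> G. g a = p} \<subseteq> {g \<in> G. g a' = p'}"
    using s t \<open>a' \<in> \<Omega>\<close> perm_group_closed[OF G] perm_group_compose[OF G]
    by (auto simp: \<phi>_def compose_eq)
  ultimately show ?thesis
    by (rule card_inj_on_le) (simp add: perm_group_finite[OF fin G])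
qed

lemma card_transporter_eq:
  assumes "finite \<Omega>" "perm_group \<Omega> G" "transitive_on \<Omega> G"
    and "a \<in> \<Omega>" "p \<in> \<Omega>" "a' \<in> \<Omega>" "p' \<in> \<Omega>"
  shows "card {g \<in> G. g a = p} = card {g \<in> G. g a' = p'}"
  using card_transporter_le[OF assms] card_transporter_le[OF assms(1-3) assms(6,7,4,5)] by simp

lemma card_mult_card_transporter:
  assumes fin: "finite \<Omega>" and G: "perm_group \<Omega> G" and tr: "transitive_on \<Omega> G"
    and "a \<in> \<Omega>" "p \<in> \<Omega>"
  shows "card \<Omega> * card {g \<in> G. g a = p} = card G"
proof -
  have "{g \<in> G. g a \<in> \<Omega>} = G"
    using perm_group_closed[OF G _ \<open>a \<in> \<Omega>\<close>] by blast
  then have "card G = card {g \<in> G. g a \<in> \<Omega>}"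
    by simp
  also have "\<dots> = (\<Sum>q\<in>\<Omega> \<inter> \<Omega>. card {g \<in> G. g a = q})"
    using perm_group_finite[OF fin G] perm_group_closed[OF G _ \<open>a \<in> \<Omega>\<close>] fin
    by (rule card_preimage_eq_sum_card_fibres)
  also have "\<dots> = card \<Omega> * card {g \<in> G. g a = p}"
    using card_transporter_eq[OF fin G tr \<open>a \<in> \<Omega>\<close> _ \<open>a \<in> \<Omega>\<close> \<open>p \<in> \<Omega>\<close>] by simp
  finally show ?thesis ..
qed

lemma min_rank_bij_betw_image:
  assumes S: "transf_semigroup \<Omega> S" and fin: "finite \<Omega>"
    and f: "f \<in> S" and min: "\<forall>h\<in>S. rank \<Omega> f \<le> rank \<Omega> h" and s: "s \<in> S"
  shows "bij_betw (\<lambda>a. f (s a)) (f ` \<Omega>) (f ` \<Omega>)"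
proof -
  let ?A = "f ` \<Omega>"
  have finA: "finite ?A" using fin by simp
  have sub: "(\<lambda>a. f (s a)) ` ?A \<subseteq> ?A"
    using transf_semigroup_closed[OF S] f s by auto
  have "compose \<Omega> f (compose \<Omega> s f) \<in> S"
    using S f s unfolding transf_semigroup_def by blast
  moreover have "compose \<Omega> f (compose \<Omega> s f) ` \<Omega> = (\<lambda>a. f (s a)) ` ?A"
    using transf_semigroup_closed[OF S f] by (auto simp: compose_eq image_image)
  ultimately have "card ?A \<le> card ((\<lambda>a. f (s a)) ` ?A)"
    using min unfolding rank_def by metis
  with card_image_le[OF finA, of "\<lambda>a. f (s a)"]
  have "card ((\<lambda>a. f (s a)) ` ?A) = card ?A" by simp
  then have "(\<lambda>a. f (s a)) ` ?A = ?A"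
    using card_subset_eq[OF finA sub] by simp
  then show ?thesis
    using eq_card_imp_inj_on[OF finA, of "\<lambda>a. f (s a)"] by (simp add: bij_betw_def)
qed

lemma rank_compose_min_rank:
  assumes S: "transf_semigroup \<Omega> S" and fin: "finite \<Omega>"
    and f: "f \<in> S" and min: "\<forall>h\<in>S. rank \<Omega> f \<le> rank \<Omega> h" and s: "s \<in> S"
  shows "rank \<Omega> (compose \<Omega> f s) = rank \<Omega> f"
proof (rule antisym)
  have "compose \<Omega> f s ` \<Omega> \<subseteq> f ` \<Omega>"
    using transf_semigroup_closed[OF S s] by (auto simp: compose_eq)
  then show "rank \<Omega> (compose \<Omega> f s) \<le> rank \<Omega> f"
    unfolding rank_def using fin by (simp add: card_mono)
  show "rank \<Omega> f \<le> rank \<Omega> (compose \<Omega> f s)"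
    using S f s min unfolding transf_semigroup_def by blast
qed

lemma card_kernel_class_min_rank:
  assumes S: "transf_semigroup \<Omega> S" and fin: "finite \<Omega>"
    and G: "perm_group \<Omega> G" "G \<subseteq> S" and tr: "transitive_on \<Omega> G"
    and f: "f \<in> S" and min: "\<forall>h\<in>S. rank \<Omega> f \<le> rank \<Omega> h" and y: "y \<in> f ` \<Omega>"
  shows "card {x \<in> \<Omega>. f x = y} * rank \<Omega> f = card \<Omega>"
proof -
  define A where "A = f ` \<Omega>"
  define P where "P = {x \<in> \<Omega>. f x = y}"
  have finA: "finite A" and finG: "finite G" and AO: "A \<subseteq> \<Omega>"
    using fin perm_group_finite[OF fin G(1)] transf_semigroup_closed[OF S f]
    by (auto simp: A_def)
  have hits_y_once: "card {a \<in> A. f (g a) = y} = 1" if "g \<in> G" for g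
  proof -
    have bij: "bij_betw (\<lambda>a. f (g a)) A A"
      unfolding A_def using min_rank_bij_betw_image[OF S fin f min] that G(2) by blast
    then obtain a where a: "a \<in> A" "f (g a) = y"
      using y unfolding A_def by (metis bij_betw_imp_surj_on imageE)
    then have "{a \<in> A. f (g a) = y} = {a}"
      using bij_betw_imp_inj_on[OF bij] by (auto dest: inj_onD)
    then show ?thesis by simp
  qed
  have transporters: "card \<Omega> * card {g \<in> G. f (g a) = y} = card P * card G" if "a \<in> A" for a
  proof -
    have "card {g \<in> G. f (g a) = y} = card {g \<in> G. g a \<in> P}"
      using perm_group_closed[OF G(1)] that AO unfolding P_def
      by (intro arg_cong[where f = card]) auto
    also have "\<dots> = (\<Sum>p\<in>\<Omega> \<inter> P. card {g \<in> G. g a = p})"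
      using finG perm_group_closed[OF G(1)] that AO fin by (intro card_preimage_eq_sum_card_fibres) auto
    finally show ?thesis
      using card_mult_card_transporter[OF fin G(1) tr] that AO
      by (simp add: sum_distrib_left P_def Int_absorb1 subsetD)
  qed
  have "card \<Omega> * card G = card \<Omega> * (\<Sum>g\<in>G. card {a \<in> A. f (g a) = y})"
    using hits_y_once by simp
  also have "\<dots> = (\<Sum>a\<in>A. card \<Omega> * card {g \<in> G. f (g a) = y})"
    by (simp add: sum_card_Collect_swap[OF finG finA] sum_distrib_left)
  also have "\<dots> = card P * rank \<Omega> f * card G"
    using transporters by (simp add: A_def rank_def)
  finally have "card \<Omega> * card G = card P * rank \<Omega> f * card G" .
  moreover have "card G > 0"
    using G(1) finG unfolding perm_group_def by (auto simp: card_gt_0_iff)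
  ultimately show ?thesis
    unfolding P_def by simp
qed

lemma kernel_partition_eq: "kernel_partition \<Omega> h = (\<lambda>x. {z \<in> \<Omega>. h z = h x}) ` \<Omega>"
  unfolding kernel_partition_def by auto

lemma kernel_partition_class:
  "B \<in> kernel_partition \<Omega> h \<Longrightarrow> x \<in> B \<Longrightarrow> B = {z \<in> \<Omega>. h z = h x}"
  unfolding kernel_partition_eq by auto

lemma kernel_partition_disjoint: "pairwise disjnt (kernel_partition \<Omega> h)"
  unfolding pairwise_def disjnt_def kernel_partition_eq by auto

lemma card_kernel_partition: "card (kernel_partition \<Omega> h) = rank \<Omega> h"
proof -
  have "kernel_partition \<Omega> h = (\<lambda>y. \<Omega> \<inter> h -` {y}) ` h ` \<Omega>"
    unfolding kernel_partition_def by blast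
  moreover have "inj_on (\<lambda>y. \<Omega> \<inter> h -` {y}) (h ` \<Omega>)"
    by (rule inj_onI) blast
  ultimately show ?thesis
    by (simp add: card_image rank_def)
qed

lemma card_Diff_Union_kernel_classes:
  assumes fin: "finite \<Omega>"
    and K: "K \<subseteq> kernel_partition \<Omega> h" "\<And>B. B \<in> K \<Longrightarrow> card B = m"
  shows "card (\<Omega> - \<Union>K) = card \<Omega> - card K * m"
proof -
  have sub: "\<Union>K \<subseteq> \<Omega>"
    using K(1) unfolding kernel_partition_def by blast
  have "card (\<Union>K) = sum card K"
    using pairwise_subset[OF kernel_partition_disjoint K(1)] sub fin
    by (intro card_Union_disjoint) (auto intro: finite_subset)
  also have "\<dots> = card K * m"
    using K(2) by simp
  finally show ?thesis
    using card_Diff_subset[OF finite_subset[OF sub fin] sub] by simp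
qed

lemma two_kernel_classes_outside:
  assumes fin: "finite \<Omega>" and K: "K \<subseteq> kernel_partition \<Omega> h"
    and rank: "card K + 2 \<le> rank \<Omega> h"
  obtains x1 x2 where "x1 \<in> \<Omega> - \<Union>K" "x2 \<in> \<Omega> - \<Union>K" "h x1 \<noteq> h x2"
proof -
  have "finite (kernel_partition \<Omega> h)"
    using fin by (simp add: kernel_partition_eq)
  then have "1 < card (kernel_partition \<Omega> h - K)"
    using K rank by (simp add: card_Diff_subset finite_subset card_kernel_partition)
  then obtain B1 B2 where B: "B1 \<in> kernel_partition \<Omega> h - K" "B2 \<in> kernel_partition \<Omega> h - K" "B1 \<noteq> B2"
    using card_le_Suc0_iff_eq[of "kernel_partition \<Omega> h - K"] by fastforce
  then obtain x1 x2 where x: "x1 \<in> \<Omega>" "x2 \<in> \<Omega>"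
    and B_eq: "B1 = {z \<in> \<Omega>. h z = h x1}" "B2 = {z \<in> \<Omega>. h z = h x2}"
    unfolding kernel_partition_eq by blast
  have outside: "x \<in> \<Omega> - \<Union>K" if x: "x \<in> \<Omega>" "{z \<in> \<Omega>. h z = h x} \<notin> K" for x
  proof
    show "x \<notin> \<Union>K"
    proof
      assume "x \<in> \<Union>K"
      then obtain B where "B \<in> K" "x \<in> B" by blast
      with kernel_partition_class[OF subsetD[OF K \<open>B \<in> K\<close>] \<open>x \<in> B\<close>] x(2) show False
        by simp
    qed
  qed (use x in simp)
  have "h x1 \<noteq> h x2"
    using B(3) B_eq by auto
  then show ?thesis
    using that outside[of x1] outside[of x2] x B B_eq by blast
qed

lemma coarser_kernel_constant_outside:
  assumes fin: "finite \<Omega>"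
    and coarser: "\<And>x z. x \<in> \<Omega> \<Longrightarrow> z \<in> \<Omega> \<Longrightarrow> h x = h z \<Longrightarrow> k x = k z"
    and uniform: "\<And>x. x \<in> \<Omega> \<Longrightarrow> card {z \<in> \<Omega>. k z = k x} = m"
    and K: "K \<subseteq> kernel_partition \<Omega> h" "\<And>B. B \<in> K \<Longrightarrow> card B = m"
    and complement: "card (\<Omega> - \<Union>K) = m"
    and x: "x \<in> \<Omega> - \<Union>K" and z: "z \<in> \<Omega> - \<Union>K"
  shows "k x = k z"
proof -
  have kernel_class: "{w \<in> \<Omega>. k w = k y} = \<Omega> - \<Union>K" if y: "y \<in> \<Omega> - \<Union>K" for y
  proof -
    let ?C = "{w \<in> \<Omega>. k w = k y}"
    have finC: "finite ?C" using fin by simp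
    have "?C \<subseteq> \<Omega> - \<Union>K"
    proof
      fix w assume w: "w \<in> ?C"
      show "w \<in> \<Omega> - \<Union>K"
      proof (rule ccontr)
        assume "w \<notin> \<Omega> - \<Union>K"
        then obtain B where B: "B \<in> K" "w \<in> B" using w by blast
        have "B = {v \<in> \<Omega>. h v = h w}"
          using kernel_partition_class[OF subsetD[OF K(1) B(1)] B(2)] .
        then have "B \<subseteq> ?C"
          using coarser[of _ w] w by fastforce
        moreover have "card B = card ?C"
          using K(2)[OF B(1)] uniform y by simp
        ultimately have "B = ?C"
          using card_subset_eq[OF finC] by blast
        then show False
          using y B(1) by blast
      qed
    qed
    moreover have "card ?C = card (\<Omega> - \<Union>K)"
      using uniform y complement by simp
    ultimately show ?thesis
      using card_subset_eq fin by (metis finite_Diff)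
  qed
  have "z \<in> {w \<in> \<Omega>. k w = k x}"
    using kernel_class[OF x] z by (simp only:)
  then show ?thesis by simp
qed

lemma primitive_separates_unless_constant:
  assumes G: "perm_group \<Omega> G" and prim: "primitive \<Omega> G"
    and "a \<in> \<Omega>" "b \<in> \<Omega>" and same: "\<forall>g\<in>G. f (g a) = f (g b)"
  shows "a = b \<or> (\<forall>x\<in>\<Omega>. \<forall>y\<in>\<Omega>. f x = f y)"
proof -
  define E where "E = {(x, y) \<in> \<Omega> \<times> \<Omega>. \<forall>g\<in>G. f (g x) = f (g y)}"
  have "equiv \<Omega> E"
    unfolding E_def equiv_def refl_on_def sym_def trans_def by auto
  moreover have "preserves_rel G E"
    unfolding preserves_rel_def
  proof (intro ballI, clarify)
    fix g x y assume g: "g \<in> G" and "(x, y) \<in> E"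
    then have xy: "x \<in> \<Omega>" "y \<in> \<Omega>" and "\<forall>g'\<in>G. f (compose \<Omega> g' g x) = f (compose \<Omega> g' g y)"
      using perm_group_compose[OF G g] unfolding E_def by auto
    then show "(g x, g y) \<in> E"
      using perm_group_closed[OF G g] unfolding E_def by (simp add: compose_eq)
  qed
  ultimately consider "E = Id_on \<Omega>" | "E = \<Omega> \<times> \<Omega>"
    using prim unfolding primitive_def by blast
  then show ?thesis
  proof cases
    case 1
    have "(a, b) \<in> E"
      using assms(3,4) same unfolding E_def by blast
    then show ?thesis
      using 1 by auto
  next
    case 2
    have id: "restrict id \<Omega> \<in> G"
      using G unfolding perm_group_def by simp
    have "f x = f y" if "x \<in> \<Omega>" "y \<in> \<Omega>" for x y
    proof -
      have "\<forall>g\<in>G. f (g x) = f (g y)"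
        using 2 that unfolding E_def by blast
      then have "f (restrict id \<Omega> x) = f (restrict id \<Omega> y)"
        using id by blast
      then show ?thesis
        using that by simp
    qed
    then show ?thesis by blast
  qed
qed

lemma min_rank_compose_constant_outside:
  assumes S: "transf_semigroup \<Omega> S" and fin: "finite \<Omega>"
    and G: "perm_group \<Omega> G" "G \<subseteq> S" and tr: "transitive_on \<Omega> G"
    and f: "f \<in> S" and min: "\<forall>h\<in>S. rank \<Omega> f \<le> rank \<Omega> h"
    and m: "m * rank \<Omega> f = card \<Omega>" and h: "h \<in> S" and s: "s \<in> S"
    and K: "K \<subseteq> kernel_partition \<Omega> h" "\<And>B. B \<in> K \<Longrightarrow> card B = m"
    and complement: "card (\<Omega> - \<Union>K) = m"
    and x: "x \<in> \<Omega> - \<Union>K" and z: "z \<in> \<Omega> - \<Union>K"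
  shows "f (s (h x)) = f (s (h z))"
proof -
  define k where "k = compose \<Omega> f (compose \<Omega> s h)"
  have k_eq: "k y = f (s (h y))" if "y \<in> \<Omega>" for y
    using that transf_semigroup_closed[OF S h] by (simp add: k_def compose_eq)
  have "compose \<Omega> s h \<in> S"
    using S h s unfolding transf_semigroup_def by blast
  then have k: "k \<in> S" "rank \<Omega> k = rank \<Omega> f"
    unfolding k_def using S f s rank_compose_min_rank[OF S fin f min]
    by (auto simp: transf_semigroup_def)
  have "rank \<Omega> f > 0"
    using x fin unfolding rank_def by (auto simp: card_gt_0_iff)
  moreover have "card {w \<in> \<Omega>. k w = k y} * rank \<Omega> f = m * rank \<Omega> f" if "y \<in> \<Omega>" for y
    using card_kernel_class_min_rank[OF S fin G tr k(1), of "k y"] k(2) min m that by simp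
  ultimately have uniform: "card {w \<in> \<Omega>. k w = k y} = m" if "y \<in> \<Omega>" for y
    using that by simp
  have "k x = k z"
    using fin _ uniform K complement x z
    by (rule coarser_kernel_constant_outside) (simp add: k_eq)
  then show ?thesis
    using x z k_eq by simp
qed

lemma card_kernel_classes_of_quotient_size_ne:
  assumes S: "transf_semigroup \<Omega> S" and fin: "finite \<Omega>"
    and G: "perm_group \<Omega> G" "G \<subseteq> S" and prim: "primitive \<Omega> G"
    and f: "f \<in> S" and min: "\<forall>h\<in>S. rank \<Omega> f \<le> rank \<Omega> h" and r: "1 < rank \<Omega> f"
    and h: "h \<in> S" "rank \<Omega> f < rank \<Omega> h"
  shows "card {B \<in> kernel_partition \<Omega> h. card B * rank \<Omega> f = card \<Omega>} \<noteq> rank \<Omega> f - 1"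
proof
  define K where "K = {B \<in> kernel_partition \<Omega> h. card B * rank \<Omega> f = card \<Omega>}"
  assume card_K: "card K = rank \<Omega> f - 1"
  have tr: "transitive_on \<Omega> G"
    using prim unfolding primitive_def by simp
  obtain x0 where "x0 \<in> \<Omega>"
    using r unfolding rank_def by fastforce
  define m where "m = card {x \<in> \<Omega>. f x = f x0}"
  have m: "m * rank \<Omega> f = card \<Omega>"
    using card_kernel_class_min_rank[OF S fin G tr f min] \<open>x0 \<in> \<Omega>\<close> m_def by blast
  have K_sub: "K \<subseteq> kernel_partition \<Omega> h"
    unfolding K_def by blast
  have K_size: "card B = m" if "B \<in> K" for B
  proof -
    have "card B * rank \<Omega> f = m * rank \<Omega> f"
      using m that unfolding K_def by simp
    then show ?thesis
      using r by simp
  qed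
  have complement: "card (\<Omega> - \<Union>K) = m"
    using card_Diff_Union_kernel_classes[OF fin K_sub K_size] card_K m r
    by (cases "rank \<Omega> f") (auto simp: algebra_simps)
  have "card K + 2 \<le> rank \<Omega> h"
    using card_K h(2) r by simp
  then obtain x1 x2 where x: "x1 \<in> \<Omega> - \<Union>K" "x2 \<in> \<Omega> - \<Union>K" and "h x1 \<noteq> h x2"
    by (rule two_kernel_classes_outside[OF fin K_sub])
  moreover have "h x1 \<in> \<Omega>" "h x2 \<in> \<Omega>"
    using x transf_semigroup_closed[OF S h(1)] by auto
  moreover have "\<forall>g\<in>G. f (g (h x1)) = f (g (h x2))"
    using min_rank_compose_constant_outside[OF S fin G tr f min m h(1) _ K_sub K_size complement x] G(2)
    by blast
  ultimately have "\<forall>x\<in>\<Omega>. \<forall>y\<in>\<Omega>. f x = f y"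
    using primitive_separates_unless_constant[OF G(1) prim] by blast
  then have "f ` \<Omega> \<subseteq> {f x0}"
    using \<open>x0 \<in> \<Omega>\<close> by blast
  then have "rank \<Omega> f \<le> 1"
    unfolding rank_def using card_mono[of "{f x0}"] by fastforce
  then show False
    using r by simp
qed

theorem theorem12:
  fixes \<Omega> :: "'a set" and S G :: "('a \<Rightarrow> 'a) set" and n r :: nat
  assumes "finite \<Omega>" and "card \<Omega> = n"
    and "transf_semigroup \<Omega> S"
    and "perm_group \<Omega> G" and "G \<subseteq> S" and "primitive \<Omega> G"
    and "\<exists>h\<in>S. rank \<Omega> h = r" and "\<forall>h\<in>S. r \<le> rank \<Omega> h"
    and "r > 1"
  shows "\<not> (\<exists>h\<in>S. rank \<Omega> h > r \<and>
            card {B \<in> kernel_partition \<Omega> h. real (card B) = real n / real r} = r - 1)"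
proof
  obtain f where f: "f \<in> S" "rank \<Omega> f = r" and min: "\<forall>h\<in>S. rank \<Omega> f \<le> rank \<Omega> h"
    using assms(7,8) by auto
  assume "\<exists>h\<in>S. rank \<Omega> h > r \<and>
    card {B \<in> kernel_partition \<Omega> h. real (card B) = real n / real r} = r - 1"
  then obtain h where h: "h \<in> S" "rank \<Omega> f < rank \<Omega> h"
    and card: "card {B \<in> kernel_partition \<Omega> h. real (card B) = real n / real r} = r - 1"
    using f(2) by blast
  have "real (card B) = real n / real r \<longleftrightarrow> card B * rank \<Omega> f = card \<Omega>" for B
    using assms(2,9) f(2) by (simp add: field_simps flip: of_nat_mult)
  then have "{B \<in> kernel_partition \<Omega> h. real (card B) = real n / real r}
      = {B \<in> kernel_partition \<Omega> h. card B * rank \<Omega> f = card \<Omega>}"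
    by blast
  then have "card {B \<in> kernel_partition \<Omega> h. card B * rank \<Omega> f = card \<Omega>} = rank \<Omega> f - 1"
    using card f(2) by simp
  then show False
    using card_kernel_classes_of_quotient_size_ne[OF assms(3,1,4,5,6) f(1) min _ h] f(2) assms(9)
    by simp
qed

end
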